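(* Let $\mathcal A=(Q,\Sigma,\delta,\rho)$ be a connected bireversible Mealy automaton whose labeled orbit tree $\mathfrak t(\mathcal A)$ has no active self-liftable branch, and let $\mathfrak j$ be a jungle tree of $\mathfrak t(\mathcal A)$. Then the relation $\sim$ on the set of stems of $\mathfrak j$ is an equivalence relation.
   Context: Mealy automata. A Mealy automaton is $\mathcal A=(Q,\Sigma,\delta,\rho)$ with $Q,\Sigma$ finite non-empty sets, $\delta=(\delta_i\colon Q\to Q)_{i\in\Sigma}$, $\rho=(\rho_x\colon\Sigma\to\Sigma)_{x\in Q}$; transitions $x\xrightarrow{i\mid\rho_x(i)}\delta_i(x)$. Invertible: each $\rho_x$ a permutation of $\Sigma$; reversible: each $\delta_i$ a permutation of $Q$; bireversible: invertible, reversible, and for each $j\in\Sigma$ the map $x\mapsto\delta_{\rho_x^{-1}(j)}(x)$ is a permutation of $Q$. Connected: the directed graph on $Q$ with edges $x\to\delta_i(x)$ is connected. Extensions: $\rho_x(i\mathbf s)=\rho_x(i)\rho_{\delta_i(x)}(\mathbf s)$ on $\Sigma^*$; $\rho_{x_1\cdots x_m}=\rho_{x_m}\circ\cdots\circ\rho_{x_1}$ (and $\rho$ of the empty word is the identity); dually $\delta_i(x\mathbf u)=\delta_i(x)\delta_{\rho_x(i)}(\mathbf u)$ on $Q^*$, $\delta_{i_1\cdots i_m}=\delta_{i_m}\circ\cdots\circ\delta_{i_1}$. The connected components of the $n$-th power $\mathcal A^n$ (stateset $Q^n$, transitions $\mathbf u\xrightarrow{i\mid\rho_{\mathbf u}(i)}\delta_i(\mathbf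 u)$) are, for reversible $\mathcal A$, the orbits of $Q^n$ under the maps $\delta_{\mathbf s}$. Orbit tree $\mathfrak t(\mathcal A)$: vertices at level $n\ge0$ are the connected components of $\mathcal A^n$; an edge from the component of $\mathbf u\in Q^n$ to that of $\mathbf ux$ for all $\mathbf u,x$; edge $C\to D$ labeled $\#D/\#C$. $\top,\bot$ = first/last vertex of a downward path; level of an edge/path = level of its top vertex. A word of $Q^*\cup Q^\omega$ represents the initial path through the components of its prefixes. Edge $e$ is liftable to $f$ if every word of $\bot(e)$ has a suffix in $\bot(f)$; paths $(e_i)_{i\in I}$, $(f_i)_{i\in I}$: liftable if each $e_i$ is liftable to $f_i$. $f$ is a legitimate child of $e$ if $\top(f)=\bot(e)$ and $f$ is liftable to $e$. A path/subtree $\mathfrak s$ is $k$-self-liftable if for all $i\ge0$ every path in $\mathfrak s$ starting at level $i+k$ is liftable to a path in $\mathfrak s$ starting at level $i$; self-liftable if $k$-self-liftable for some $k>0$. A branch (infinite initial path) is active if its labels are not eventually all $1$. Jungle trees: for a finite 1-self-liftable initial path $\mathbf e$ of length $n$ whose last edge has at least two legitimate children, all labeled $1$, $\mathfrak j(\mathbf e)$ consists of $\mathbf e$ plus all edges descending from $\bot(\mathbf e)$ that are liftable to the last edge of $\mathbf e$. Stems: the words of $\bot(\mathbf e)\subseteq Q^n$. A $\mathfrak j$-word is a word representing an initial path of $\mathfrak j$. For stems $\mathbf u,\mathbf v$: $\mathbf u\sim\mathbf v$ iff there is $\mathbf s\in Q^*$ such that $\mathbf{usv}$ is a $\mathfrak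 j$-word and $\rho_{\mathbf{us}}$ is the identity of $\Sigma^*$. *)

theory Defs
  imports Complex_Main
begin

text \<open>A Mealy automaton with finite non-empty stateset 'q and alphabet 's is given by
  delta :: 's => 'q => 'q (delta i = the map delta_i) and rho :: 'q => 's => 's
  (rho x = the map rho_x).  Transition: x --i|rho x i--> delta i x.\<close>

definition invertible :: "('s \<Rightarrow> 'q \<Rightarrow> 'q) \<Rightarrow> ('q \<Rightarrow> 's \<Rightarrow> 's) \<Rightarrow> bool" where
  "invertible delta rho \<longleftrightarrow> (\<forall>x. bij (rho x))"

definition reversible :: "('s \<Rightarrow> 'q \<Rightarrow> 'q) \<Rightarrow> ('q \<Rightarrow> 's \<Rightarrow> 's) \<Rightarrow> bool" where
  "reversible delta rho \<longleftrightarrow> (\<forall>i. bij (delta i))"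

definition bireversible :: "('s \<Rightarrow> 'q \<Rightarrow> 'q) \<Rightarrow> ('q \<Rightarrow> 's \<Rightarrow> 's) \<Rightarrow> bool" where
  "bireversible delta rho \<longleftrightarrow> invertible delta rho \<and> reversible delta rho \<and>
     (\<forall>j. bij (\<lambda>x. delta (inv (rho x) j) x))"

definition connected_aut :: "('s \<Rightarrow> 'q \<Rightarrow> 'q) \<Rightarrow> ('q \<Rightarrow> 's \<Rightarrow> 's) \<Rightarrow> bool" where
  "connected_aut delta rho \<longleftrightarrow>
     (let E = {(x, delta i x) | x i. True} in \<forall>x y. (x, y) \<in> (E \<union> E\<inverse>)\<^sup>*)"

fun rho1 :: "('s \<Rightarrow> 'q \<Rightarrow> 'q) \<Rightarrow> ('q \<Rightarrow> 's \<Rightarrow> 's) \<Rightarrow> 'q \<Rightarrow> 's list \<Rightarrow> 's list" where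
  "rho1 delta rho x [] = []"
| "rho1 delta rho x (i # s) = rho x i # rho1 delta rho (delta i x) s"

fun rhoW :: "('s \<Rightarrow> 'q \<Rightarrow> 'q) \<Rightarrow> ('q \<Rightarrow> 's \<Rightarrow> 's) \<Rightarrow> 'q list \<Rightarrow> 's list \<Rightarrow> 's list" where
  "rhoW delta rho [] s = s"
| "rhoW delta rho (x # u) s = rhoW delta rho u (rho1 delta rho x s)"

fun delta1 :: "('s \<Rightarrow> 'q \<Rightarrow> 'q) \<Rightarrow> ('q \<Rightarrow> 's \<Rightarrow> 's) \<Rightarrow> 's \<Rightarrow> 'q list \<Rightarrow> 'q list" where
  "delta1 delta rho i [] = []"
| "delta1 delta rho i (x # u) = delta i x # delta1 delta rho (rho x i) u"

text \<open>Transition relation of the powers A^n (all n at once): u --> delta_i(u).\<close>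
definition pow_step :: "('s \<Rightarrow> 'q \<Rightarrow> 'q) \<Rightarrow> ('q \<Rightarrow> 's \<Rightarrow> 's) \<Rightarrow> ('q list \<times> 'q list) set" where
  "pow_step delta rho = {(u, delta1 delta rho i u) | u i. True}"

text \<open>Connected component of u in A^(length u) (components of the underlying
  undirected graph; transitions preserve length).\<close>
definition comp :: "('s \<Rightarrow> 'q \<Rightarrow> 'q) \<Rightarrow> ('q \<Rightarrow> 's \<Rightarrow> 's) \<Rightarrow> 'q list \<Rightarrow> 'q list set" where
  "comp delta rho u = {v. (u, v) \<in> (pow_step delta rho \<union> (pow_step delta rho)\<inverse>)\<^sup>*}"

text \<open>Edges of the orbit tree: from the component of u to the component of u x.
  An edge is represented by the pair (top vertex, bottom vertex).\<close>
definition tree_edge :: "('s \<Rightarrow> 'q \<Rightarrow> 'q) \<Rightarrow> ('q \<Rightarrow> 's \<Rightarrow> 's) \<Rightarrow> 'q list set \<Rightarrow> 'q list set \<Rightarrow> bool" where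
  "tree_edge delta rho C D \<longleftrightarrow> (\<exists>u x. C = comp delta rho u \<and> D = comp delta rho (u @ [x]))"

definition label :: "'q list set \<times> 'q list set \<Rightarrow> rat" where
  "label e = of_nat (card (snd e)) / of_nat (card (fst e))"

definition liftable :: "'q list set \<times> 'q list set \<Rightarrow> 'q list set \<times> 'q list set \<Rightarrow> bool" where
  "liftable e f \<longleftrightarrow> (\<forall>w \<in> snd e. \<exists>a v. w = a @ v \<and> v \<in> snd f)"

text \<open>Initial paths are given by their vertex sequences p 0, p 1, ... (p j at level j).
  A finite initial path of length n (n edges):\<close>
definition init_path :: "('s \<Rightarrow> 'q \<Rightarrow> 'q) \<Rightarrow> ('q \<Rightarrow> 's \<Rightarrow> 's) \<Rightarrow> (nat \<Rightarrow> 'q list set) \<Rightarrow> nat \<Rightarrow> bool" where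
  "init_path delta rho p n \<longleftrightarrow> p 0 = comp delta rho [] \<and>
     (\<forall>j < n. tree_edge delta rho (p j) (p (Suc j)))"

definition branch :: "('s \<Rightarrow> 'q \<Rightarrow> 'q) \<Rightarrow> ('q \<Rightarrow> 's \<Rightarrow> 's) \<Rightarrow> (nat \<Rightarrow> 'q list set) \<Rightarrow> bool" where
  "branch delta rho p \<longleftrightarrow> p 0 = comp delta rho [] \<and>
     (\<forall>j. tree_edge delta rho (p j) (p (Suc j)))"

definition self_liftable_fin :: "nat \<Rightarrow> (nat \<Rightarrow> 'q list set) \<Rightarrow> nat \<Rightarrow> bool" where
  "self_liftable_fin k p n \<longleftrightarrow>
     (\<forall>i m. i + k + m \<le> n \<longrightarrow>
        (\<forall>t < m. liftable (p (i + k + t), p (Suc (i + k + t))) (p (i + t), p (Suc (i + t)))))"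

definition self_liftable_branch_k :: "nat \<Rightarrow> (nat \<Rightarrow> 'q list set) \<Rightarrow> bool" where
  "self_liftable_branch_k k p \<longleftrightarrow>
     (\<forall>i. (\<forall>m. \<forall>t < m. liftable (p (i + k + t), p (Suc (i + k + t))) (p (i + t), p (Suc (i + t))))
        \<and> (\<forall>t. liftable (p (i + k + t), p (Suc (i + k + t))) (p (i + t), p (Suc (i + t)))))"

definition self_liftable_branch :: "(nat \<Rightarrow> 'q list set) \<Rightarrow> bool" where
  "self_liftable_branch p \<longleftrightarrow> (\<exists>k > 0. self_liftable_branch_k k p)"

definition active :: "(nat \<Rightarrow> 'q list set) \<Rightarrow> bool" where
  "active p \<longleftrightarrow> \<not> (\<exists>N. \<forall>j \<ge> N. label (p j, p (Suc j)) = 1)"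

definition no_active_self_liftable_branch ::
  "('s \<Rightarrow> 'q \<Rightarrow> 'q) \<Rightarrow> ('q \<Rightarrow> 's \<Rightarrow> 's) \<Rightarrow> bool" where
  "no_active_self_liftable_branch delta rho \<longleftrightarrow>
     \<not> (\<exists>p. branch delta rho p \<and> active p \<and> self_liftable_branch p)"

definition legit_child ::
  "('s \<Rightarrow> 'q \<Rightarrow> 'q) \<Rightarrow> ('q \<Rightarrow> 's \<Rightarrow> 's) \<Rightarrow> 'q list set \<times> 'q list set \<Rightarrow> 'q list set \<times> 'q list set \<Rightarrow> bool" where
  "legit_child delta rho e f \<longleftrightarrow>
     tree_edge delta rho (fst f) (snd f) \<and> fst f = snd e \<and> liftable f e"

definition jungle_path :: "('s \<Rightarrow> 'q \<Rightarrow> 'q) \<Rightarrow> ('q \<Rightarrow> 's \<Rightarrow> 's) \<Rightarrow> (nat \<Rightarrow> 'q list set) \<Rightarrow> nat \<Rightarrow> bool" where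
  "jungle_path delta rho p n \<longleftrightarrow> 0 < n \<and> init_path delta rho p n \<and> self_liftable_fin 1 p n \<and>
     (let e = (p (n - 1), p n) in
       (\<exists>f g. f \<noteq> g \<and> legit_child delta rho e f \<and> legit_child delta rho e g) \<and>
       (\<forall>f. legit_child delta rho e f \<longrightarrow> label f = 1))"

definition jungle_edges ::
  "('s \<Rightarrow> 'q \<Rightarrow> 'q) \<Rightarrow> ('q \<Rightarrow> 's \<Rightarrow> 's) \<Rightarrow> (nat \<Rightarrow> 'q list set) \<Rightarrow> nat \<Rightarrow> ('q list set \<times> 'q list set) set" where
  "jungle_edges delta rho p n =
     {(p j, p (Suc j)) | j. j < n} \<union>
     {(C, D). tree_edge delta rho C D \<and>
        (p n, C) \<in> {(A, B). tree_edge delta rho A B}\<^sup>* \<and>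
        liftable (C, D) (p (n - 1), p n)}"

definition jungle_word ::
  "('s \<Rightarrow> 'q \<Rightarrow> 'q) \<Rightarrow> ('q \<Rightarrow> 's \<Rightarrow> 's) \<Rightarrow> (nat \<Rightarrow> 'q list set) \<Rightarrow> nat \<Rightarrow> 'q list \<Rightarrow> bool" where
  "jungle_word delta rho p n w \<longleftrightarrow>
     (\<forall>k < length w. (comp delta rho (take k w), comp delta rho (take (Suc k) w))
                        \<in> jungle_edges delta rho p n)"

definition stems :: "(nat \<Rightarrow> 'q list set) \<Rightarrow> nat \<Rightarrow> 'q list set" where
  "stems p n = p n"

definition jungle_sim ::
  "('s \<Rightarrow> 'q \<Rightarrow> 'q) \<Rightarrow> ('q \<Rightarrow> 's \<Rightarrow> 's) \<Rightarrow> (nat \<Rightarrow> 'q list set) \<Rightarrow> nat \<Rightarrow> 'q list \<Rightarrow> 'q list \<Rightarrow> bool" where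
  "jungle_sim delta rho p n u v \<longleftrightarrow>
     (\<exists>s. jungle_word delta rho p n (u @ s @ v) \<and> (\<forall>t. rhoW delta rho (u @ s) t = t))"

end

theory Submission
  imports Defs "HOL-Library.FuncSet" "HOL-Library.Stream"
begin

text \<open>
  A word of length at least n is a j-word exactly when all its factors of length n are stems,
  so j-words are walks in the graph on stems whose edges are the words of length n + 1 with
  both n-factors stems. Such an edge word spans a legitimate child of the last edge of e,
  whose label is 1; hence deleting its first (or its last) letter maps its component
  bijectively onto the stems. Counting components shows that every stem has as many outgoing
  as incoming edges, so every walk can be closed up to a cycle.

  For a cycle word c, the branch represented by c^\<omega> is |c|-self-liftable, hence not active:
  the components of the powers c^k eventually have constant size, so deleting the prefix c^r is
  a bijection from the component of c^(r+K) onto that of c^K. The transition tables read off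
  through these bijections take finitely many values, and two equal tables give d > 0 with
  \<rho> of c^d the identity. Going around such cycles gives reflexivity and symmetry of the
  relation; transitivity is concatenation of j-words along the common stem.
\<close>

section \<open>Pigeonhole and balanced digraphs\<close>

lemma finite_range_imp_repeat:
  fixes f :: "nat \<Rightarrow> 'a"
  assumes "finite (range f)"
  shows "\<exists>i j. i < j \<and> f i = f j"
proof -
  have "\<not> inj f"
    using assms finite_imageD by fastforce
  then obtain i j where "i \<noteq> j" "f i = f j"
    unfolding inj_def by blast
  then show ?thesis
    by (metis linorder_neq_iff)
qed

lemma inj_finite_orbit_return:
  assumes "inj f" "finite S" "f ` S \<subseteq> S" "x \<in> S"
  shows "\<exists>k>0. (f ^^ k) x = x"
proof -
  have "(f ^^ k) x \<in> S" for k
  proof (induct k)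
    case 0
    show ?case using assms(4) by simp
  next
    case (Suc k)
    then show ?case using assms(3) by (simp add: image_subset_iff)
  qed
  then have "range (\<lambda>k. (f ^^ k) x) \<subseteq> S"
    by blast
  then have "finite (range (\<lambda>k. (f ^^ k) x))"
    using assms(2) by (rule finite_subset)
  then obtain i j where ij: "i < j" "(f ^^ i) x = (f ^^ j) x"
    using finite_range_imp_repeat by blast
  have "j = i + (j - i)"
    using ij(1) by simp
  then have "(f ^^ j) x = (f ^^ i) ((f ^^ (j - i)) x)"
    by (metis funpow_add comp_apply)
  then have "(f ^^ (j - i)) x = x"
    using ij(2) inj_fn[OF assms(1)] injD by metis
  then show ?thesis
    using ij(1) zero_less_diff by blast
qed

lemma finite_restrictions_repeat:
  fixes f :: "nat \<Rightarrow> 'a \<Rightarrow> 'b"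
  assumes "finite X" "finite Y" "\<And>r x. x \<in> X \<Longrightarrow> f r x \<in> Y"
  shows "\<exists>r1 r2. r1 < r2 \<and> (\<forall>x\<in>X. f r1 x = f r2 x)"
proof -
  have "range (\<lambda>r. restrict (f r) X) \<subseteq> (\<Pi>\<^sub>E x\<in>X. Y)"
    using assms(3) by auto
  moreover have "finite (\<Pi>\<^sub>E x\<in>X. Y)"
    using assms(1,2) by (rule finite_PiE)
  ultimately have "finite (range (\<lambda>r. restrict (f r) X))"
    by (rule finite_subset)
  then obtain r1 r2 where "r1 < r2" and eq: "restrict (f r1) X = restrict (f r2) X"
    using finite_range_imp_repeat by blast
  have "f r1 x = f r2 x" if "x \<in> X" for x
    using fun_cong[OF eq, of x] that by simp
  then show ?thesis
    using \<open>r1 < r2\<close> by blast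
qed

lemma card_fibers:
  assumes "finite A" "finite B" "f ` A \<subseteq> B"
  shows "card A = (\<Sum>y\<in>B. card {x \<in> A. f x = y})"
proof -
  have "A = (\<Union>y\<in>B. {x \<in> A. f x = y})"
    using assms(3) by blast
  also have "card \<dots> = (\<Sum>y\<in>B. card {x \<in> A. f x = y})"
    by (rule card_UN_disjoint) (use assms(1,2) in auto)
  finally show ?thesis .
qed

lemma balanced_digraph_reach_back:
  fixes W :: "'e set" and src tgt :: "'e \<Rightarrow> 'v"
  defines "G \<equiv> {(src w, tgt w) | w. w \<in> W}"
  assumes fin: "finite W"
    and balanced: "\<And>y. card {w \<in> W. src w = y} = card {w \<in> W. tgt w = y}"
    and uv: "(u, v) \<in> G\<^sup>*"
  shows "(v, u) \<in> G\<^sup>*"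
proof -
  define R where "R = {y. (v, y) \<in> G\<^sup>*}"
  define F where "F = src ` W \<union> tgt ` W"
  let ?X = "{w \<in> W. src w \<in> R}" and ?Y = "{w \<in> W. tgt w \<in> R}"
  have "?X \<subseteq> ?Y"
  proof (intro subsetI CollectI conjI)
    fix w assume "w \<in> ?X"
    then have "w \<in> W" "(v, src w) \<in> G\<^sup>*" "(src w, tgt w) \<in> G"
      unfolding R_def G_def by auto
    then show "w \<in> W" "tgt w \<in> R"
      unfolding R_def by auto
  qed
  moreover have "card ?X = card ?Y"
  proof -
    have "card ?X = (\<Sum>y\<in>R \<inter> F. card {w \<in> ?X. src w = y})"
      by (rule card_fibers) (use fin in \<open>auto simp: F_def\<close>)
    also have "\<dots> = (\<Sum>y\<in>R \<inter> F. card {w \<in> ?Y. tgt w = y})"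
    proof (rule sum.cong)
      fix y assume "y \<in> R \<inter> F"
      then have "{w \<in> ?X. src w = y} = {w \<in> W. src w = y}" "{w \<in> ?Y. tgt w = y} = {w \<in> W. tgt w = y}"
        by auto
      then show "card {w \<in> ?X. src w = y} = card {w \<in> ?Y. tgt w = y}"
        using balanced by simp
    qed simp
    also have "\<dots> = card ?Y"
      by (rule card_fibers[symmetric]) (use fin in \<open>auto simp: F_def\<close>)
    finally show ?thesis .
  qed
  \<comment> \<open>the edges leaving \<open>R\<close> all end in \<open>R\<close> and are as many as those entering \<open>R\<close>\<close>
  ultimately have back_closed: "?Y \<subseteq> ?X"
    using card_subset_eq[of ?Y ?X] fin by simp
  from uv have "u \<in> R"
  proof (induct rule: converse_rtrancl_induct)
    case base
    then show ?case by (simp add: R_def)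
  next
    case (step y z)
    then obtain w where "w \<in> W" "y = src w" "z = tgt w"
      unfolding G_def by blast
    then show ?case
      using back_closed step(3) by blast
  qed
  then show ?thesis
    by (simp add: R_def)
qed

section \<open>Extended transition and output maps\<close>

lemma length_concat_replicate [simp]: "length (concat (replicate k c)) = k * length c"
  by (induct k) auto

lemma concat_replicate_add: "concat (replicate (a + b) c) = concat (replicate a c) @ concat (replicate b c)"
  by (simp add: replicate_add)

lemma length_delta1 [simp]: "length (delta1 delta rho i u) = length u"
  by (induct u arbitrary: i) auto

text \<open>\<open>fold rho u\<close> is the map \<open>\<rho>\<^sub>u\<close> on single letters.\<close>

lemma delta1_append:
  "delta1 delta rho i (a @ b) = delta1 delta rho i a @ delta1 delta rho (fold rho a i) b"
  by (induct a arbitrary: i) auto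

lemma take_drop_delta1:
  "take k (delta1 delta rho i u) = delta1 delta rho i (take k u)"
  "drop k (delta1 delta rho i u) = delta1 delta rho (fold rho (take k u) i) (drop k u)"
proof -
  have "delta1 delta rho i u = delta1 delta rho i (take k u) @ delta1 delta rho (fold rho (take k u) i) (drop k u)"
    by (metis append_take_drop_id delta1_append)
  then show "take k (delta1 delta rho i u) = delta1 delta rho i (take k u)"
    "drop k (delta1 delta rho i u) = delta1 delta rho (fold rho (take k u) i) (drop k u)"
    by (simp_all add: min_def)
qed

lemma rhoW_append: "rhoW delta rho (a @ b) = rhoW delta rho b \<circ> rhoW delta rho a"
  by (induct a) auto

lemma rhoW_input_Cons:
  "rhoW delta rho u (i # s) = fold rho u i # rhoW delta rho (delta1 delta rho i u) s"
  by (induct u arbitrary: i s) auto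

lemma rhoW_input_Nil [simp]: "rhoW delta rho u [] = []"
  by (induct u) auto

lemma surj_rho1:
  assumes "\<forall>x. bij (rho x)"
  shows "surj (rho1 delta rho x)"
proof -
  have "\<exists>s. rho1 delta rho x s = t" for t
  proof (induct t arbitrary: x)
    case Nil
    show ?case by (intro exI[of _ "[]"]) simp
  next
    case (Cons j t)
    define i where "i = inv (rho x) j"
    have "rho x i = j"
      unfolding i_def using assms by (meson bij_inv_eq_iff)
    moreover obtain s where "rho1 delta rho (delta i x) s = t"
      using Cons by blast
    ultimately show ?case
      by (intro exI[of _ "i # s"]) simp
  qed
  then show ?thesis
    by (metis surjI)
qed

lemma surj_rhoW:
  assumes "\<forall>x. bij (rho x)"
  shows "surj (rhoW delta rho u)"
proof (induct u)
  case Nil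
  have "rhoW delta rho [] = id"
    by (simp add: fun_eq_iff)
  then show ?case by simp
next
  case (Cons x u)
  have "rhoW delta rho (x # u) = rhoW delta rho u \<circ> rho1 delta rho x"
    by (simp add: fun_eq_iff)
  then show ?case
    using comp_surj[OF surj_rho1[OF assms] Cons] by simp
qed

lemma bij_fold:
  assumes "\<forall>x. bij (rho x)"
  shows "bij (fold rho u)"
proof (induct u)
  case Nil
  show ?case using bij_id by (simp add: id_def)
next
  case (Cons x u)
  show ?case
    unfolding fold_Cons using Cons assms by (intro bij_comp) auto
qed

lemma inj_delta1:
  assumes "\<forall>i. bij (delta i)"
  shows "inj (delta1 delta rho i)"
proof -
  have "delta1 delta rho i u = delta1 delta rho i v \<Longrightarrow> u = v" for u v
  proof (induct u arbitrary: i v)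
    case Nil
    then show ?case by (metis length_0_conv length_delta1)
  next
    case (Cons x u)
    then obtain y w where v: "v = y # w"
      by (cases v) auto
    with Cons.prems have "delta i x = delta i y"
      by simp
    then have "x = y"
      using assms by (meson bij_def injD)
    with Cons v show ?case
      by auto
  qed
  then show ?thesis
    by (rule injI)
qed

lemma rhoW_eq_of_common_transitions:
  assumes "\<And>a i. a \<in> A \<Longrightarrow> fold rho (f a) i = fold rho (g a) i \<and>
      (\<exists>a'\<in>A. delta1 delta rho i (f a) = f a' \<and> delta1 delta rho i (g a) = g a')"
    and "a \<in> A"
  shows "rhoW delta rho (f a) = rhoW delta rho (g a)"
proof
  fix t
  show "rhoW delta rho (f a) t = rhoW delta rho (g a) t"
    using assms(2)
  proof (induct t arbitrary: a)
    case Nil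
    show ?case by simp
  next
    case (Cons i t)
    then obtain a' where "a' \<in> A" "delta1 delta rho i (f a) = f a'" "delta1 delta rho i (g a) = g a'"
      using assms(1) by blast
    with Cons show ?case
      using assms(1) by (simp add: rhoW_input_Cons)
  qed
qed

lemma exists_rhoW_eq_of_bij_drop:
  fixes delta :: "'s::finite \<Rightarrow> 'q \<Rightarrow> 'q" and B :: "nat \<Rightarrow> 'q list set"
  assumes bij: "\<And>r. bij_betw (drop (l r)) (B r) A"
    and closed: "\<And>r b i. b \<in> B r \<Longrightarrow> delta1 delta rho i b \<in> B r"
    and "finite A"
  shows "\<exists>r1 r2. r1 < r2 \<and> (\<forall>b1\<in>B r1. \<forall>b2\<in>B r2.
           drop (l r1) b1 = drop (l r2) b2 \<longrightarrow> rhoW delta rho b1 = rhoW delta rho b2)"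
proof -
  define g where "g r = the_inv_into (B r) (drop (l r))" for r
  have g_in: "g r a \<in> B r" if "a \<in> A" for r a
    using that bij_betw_the_inv_into[OF bij] unfolding g_def bij_betw_def by auto
  have g_drop: "g r (drop (l r) b) = b" if "b \<in> B r" for r b
    using that bij unfolding g_def bij_betw_def by (simp add: the_inv_into_f_f)
  have drop_in: "drop (l r) b \<in> A" if "b \<in> B r" for r b
    using that bij unfolding bij_betw_def by auto
  \<comment> \<open>the transition table of \<open>B r\<close>, read through its identification with \<open>A\<close>\<close>
  define T where "T r = (\<lambda>(a, i). (fold rho (g r a) i, drop (l r) (delta1 delta rho i (g r a))))"
    for r
  obtain r1 r2 where "r1 < r2" and T: "\<forall>ai\<in>A \<times> UNIV. T r1 ai = T r2 ai"
    using finite_restrictions_repeat[of "A \<times> UNIV" "UNIV \<times> A" T] \<open>finite A\<close>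
      drop_in[OF closed[OF g_in]] unfolding T_def by fastforce
  have "rhoW delta rho b1 = rhoW delta rho b2"
    if "b1 \<in> B r1" "b2 \<in> B r2" "drop (l r1) b1 = drop (l r2) b2" for b1 b2
  proof -
    define a where "a = drop (l r1) b1"
    have a: "a \<in> A"
      using drop_in[OF that(1)] unfolding a_def .
    have "rhoW delta rho (g r1 a) = rhoW delta rho (g r2 a)"
    proof (rule rhoW_eq_of_common_transitions[OF _ a])
      fix a i assume "a \<in> A"
      define a' where "a' = drop (l r1) (delta1 delta rho i (g r1 a))"
      have "T r1 (a, i) = T r2 (a, i)"
        using T \<open>a \<in> A\<close> by simp
      then have fold_eq: "fold rho (g r1 a) i = fold rho (g r2 a) i"
        and a': "a' = drop (l r2) (delta1 delta rho i (g r2 a))"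
        using \<open>a \<in> A\<close> unfolding T_def a'_def by simp_all
      have "a' \<in> A"
        using drop_in[OF closed[OF g_in[OF \<open>a \<in> A\<close>]]] unfolding a'_def .
      moreover have "delta1 delta rho i (g r1 a) = g r1 a'"
        unfolding a'_def by (rule sym, rule g_drop, rule closed, rule g_in, fact)
      moreover have "delta1 delta rho i (g r2 a) = g r2 a'"
        unfolding a' by (rule sym, rule g_drop, rule closed, rule g_in, fact)
      ultimately show "fold rho (g r1 a) i = fold rho (g r2 a) i \<and>
          (\<exists>a'\<in>A. delta1 delta rho i (g r1 a) = g r1 a' \<and> delta1 delta rho i (g r2 a) = g r2 a')"
        using fold_eq by blast
    qed
    moreover have "g r1 a = b1" "g r2 a = b2"
      using g_drop[OF that(1)] g_drop[OF that(2)] that(3) unfolding a_def by simp_all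
    ultimately show ?thesis
      by simp
  qed
  then show ?thesis
    using \<open>r1 < r2\<close> by blast
qed

section \<open>Components of the powers of an automaton\<close>

locale inv_rev_automaton =
  fixes delta :: "'s::finite \<Rightarrow> 'q::finite \<Rightarrow> 'q" and rho :: "'q \<Rightarrow> 's \<Rightarrow> 's"
  assumes inv_aut: "invertible delta rho" and rev_aut: "reversible delta rho"
begin

lemma bij_rho: "\<forall>x. bij (rho x)"
  using inv_aut unfolding invertible_def .

lemma bij_delta: "\<forall>i. bij (delta i)"
  using rev_aut unfolding reversible_def .

abbreviation component :: "'q list \<Rightarrow> 'q list set" where
  "component \<equiv> comp delta rho"

lemma pow_step_iff: "(u, v) \<in> pow_step delta rho \<longleftrightarrow> (\<exists>i. v = delta1 delta rho i u)"
  unfolding pow_step_def by auto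

lemma delta1_pow_step: "(u, delta1 delta rho i u) \<in> pow_step delta rho"
  unfolding pow_step_def by blast

lemma pow_step_reverse:
  assumes "(u, v) \<in> pow_step delta rho"
  shows "(v, u) \<in> (pow_step delta rho)\<^sup>*"
proof -
  obtain i where v: "v = delta1 delta rho i u"
    using assms pow_step_iff by blast
  \<comment> \<open>the injective map \<open>delta1 i\<close> permutes the finitely many words of length \<open>|u|\<close>\<close>
  let ?f = "delta1 delta rho i" and ?S = "{w :: 'q list. length w = length u}"
  have "finite ?S"
    using finite_lists_length_eq[of "UNIV :: 'q set" "length u"] by simp
  moreover have "?f ` ?S \<subseteq> ?S"
    by auto
  ultimately obtain k where "k > 0" "(?f ^^ k) u = u"
    using inj_finite_orbit_return[OF inj_delta1[OF bij_delta]] by blast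
  then have u: "(?f ^^ (k - 1)) v = u"
    unfolding v by (metis Suc_diff_1 funpow_Suc_right o_apply)
  have "(w, (?f ^^ m) w) \<in> (pow_step delta rho)\<^sup>*" for w m
    by (induct m) (auto intro: rtrancl_into_rtrancl[OF _ delta1_pow_step])
  then show ?thesis
    using u by metis
qed

lemma component_reachable: "component u = {v. (u, v) \<in> (pow_step delta rho)\<^sup>*}"
proof -
  let ?S = "pow_step delta rho"
  have "?S\<inverse> \<subseteq> ?S\<^sup>*"
    using pow_step_reverse by blast
  then have "(?S \<union> ?S\<inverse>)\<^sup>* = ?S\<^sup>*"
    by (metis le_sup_iff order_refl r_into_rtrancl rtrancl_subset subsetI)
  then show ?thesis
    unfolding comp_def by simp
qed

lemma component_self [simp]: "u \<in> component u"
  by (simp add: component_reachable)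

lemma component_delta1: "v \<in> component u \<Longrightarrow> delta1 delta rho i v \<in> component u"
  unfolding component_reachable by (auto intro: rtrancl_into_rtrancl[OF _ delta1_pow_step])

lemma component_sym:
  assumes "v \<in> component u"
  shows "u \<in> component v"
proof -
  have "(u, v) \<in> (pow_step delta rho)\<^sup>*"
    using assms component_reachable by blast
  then have "(v, u) \<in> (pow_step delta rho)\<^sup>*"
    by (induct rule: rtrancl_induct) (auto dest: pow_step_reverse intro: rtrancl_trans)
  then show ?thesis
    using component_reachable by blast
qed

lemma component_eq: "v \<in> component u \<Longrightarrow> component v = component u"
  using component_sym unfolding component_reachable by (blast intro: rtrancl_trans)

lemma component_induct [consumes 1, case_names self delta1]:
  assumes "v \<in> component u" "P u" "\<And>w i. w \<in> component u \<Longrightarrow> P w \<Longrightarrow> P (delta1 delta rho i w)"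
  shows "P v"
proof -
  have "(u, v) \<in> (pow_step delta rho)\<^sup>*"
    using assms(1) component_reachable by auto
  then show ?thesis
  proof (induct rule: rtrancl_induct)
    case base
    show ?case using assms(2) .
  next
    case (step w w')
    then show ?case
      using assms(3) component_reachable pow_step_iff by auto
  qed
qed

lemma length_component: "v \<in> component u \<Longrightarrow> length v = length u"
  by (induct rule: component_induct) simp_all

lemma finite_component: "finite (component u)"
proof (rule finite_subset)
  show "component u \<subseteq> {w. set w \<subseteq> UNIV \<and> length w = length u}"
    using length_component by blast
  show "finite {w. set w \<subseteq> (UNIV :: 'q set) \<and> length w = length u}"
    by (rule finite_lists_length_eq) simp
qed

lemma card_component_pos: "card (component u) > 0"
  using finite_component card_gt_0_iff component_self by blast

lemma take_component: "take k ` component u = component (take k u)"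
proof (intro equalityI subsetI)
  fix y assume "y \<in> take k ` component u"
  then obtain v where "v \<in> component u" "y = take k v"
    by blast
  then show "y \<in> component (take k u)"
    by (induct arbitrary: y rule: component_induct) (auto simp: take_drop_delta1 component_delta1)
next
  fix y assume "y \<in> component (take k u)"
  then show "y \<in> take k ` component u"
  proof (induct rule: component_induct)
    case (delta1 w i)
    then obtain v where "v \<in> component u" "w = take k v"
      by blast
    then show ?case
      by (metis component_delta1 image_eqI take_drop_delta1(1))
  qed simp
qed

lemma drop_component: "drop k ` component u = component (drop k u)"
proof (intro equalityI subsetI)
  fix y assume "y \<in> drop k ` component u"
  then obtain v where "v \<in> component u" "y = drop k v"
    by blast
  then show "y \<in> component (drop k u)"
    by (induct arbitrary: y rule: component_induct) (auto simp: take_drop_delta1 component_delta1)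
next
  fix y assume "y \<in> component (drop k u)"
  then show "y \<in> drop k ` component u"
  proof (induct rule: component_induct)
    case (delta1 w i)
    then obtain v where v: "v \<in> component u" "w = drop k v"
      by blast
    define j where "j = inv (fold rho (take k v)) i"
    have "fold rho (take k v) j = i"
      unfolding j_def using bij_fold[OF bij_rho] by (meson bij_inv_eq_iff)
    then have "drop k (delta1 delta rho j v) = delta1 delta rho i w"
      by (simp add: take_drop_delta1 v(2))
    then show ?case
      using component_delta1[OF v(1)] by (metis image_eqI)
  qed simp
qed

section \<open>Powers of a word acting trivially\<close>

lemma rhoW_append_cancel:
  assumes "rhoW delta rho (a @ b) = rhoW delta rho (a @ b')"
  shows "rhoW delta rho b = rhoW delta rho b'"
proof -
  have "rhoW delta rho b \<circ> rhoW delta rho a = rhoW delta rho b' \<circ> rhoW delta rho a"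
    using assms unfolding rhoW_append .
  then have "\<forall>x\<in>UNIV. (rhoW delta rho b \<circ> rhoW delta rho a) x = (rhoW delta rho b' \<circ> rhoW delta rho a) x"
    by simp
  then show ?thesis
    by (rule surj_fun_eq[OF surj_rhoW[OF bij_rho]])
qed

lemma branch_stake: "branch delta rho (\<lambda>j. component (stake j s))"
  unfolding branch_def tree_edge_def
  by (metis stake.simps(1) stake_Suc)

lemma self_liftable_branch_stake:
  assumes "0 < L" "sdrop L s = s"
  shows "self_liftable_branch (\<lambda>j. component (stake j s))"
proof -
  have lift: "liftable (X, component (stake (Suc (L + j)) s)) (Y, component (stake (Suc j) s))"
    for X Y j
    unfolding liftable_def snd_conv
  proof
    fix w assume "w \<in> component (stake (Suc (L + j)) s)"
    then have "drop L w \<in> component (drop L (stake (L + Suc j) s))"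
      using drop_component by (metis add_Suc_right image_eqI)
    also have "drop L (stake (L + Suc j) s) = stake (Suc j) s"
      using stake_add[of L s "Suc j"] assms(2) by (metis append_eq_conv_conj length_stake)
    finally show "\<exists>a v. w = a @ v \<and> v \<in> component (stake (Suc j) s)"
      by (metis append_take_drop_id)
  qed
  have "liftable (component (stake (i + L + t) s), component (stake (Suc (i + L + t)) s))
                 (component (stake (i + t) s), component (stake (Suc (i + t)) s))" for i t
    using lift[of _ "i + t"] by (simp add: add.commute add.left_commute)
  then show ?thesis
    unfolding self_liftable_branch_def self_liftable_branch_k_def
    using assms(1) by blast
qed

lemma card_eq_of_label_one:
  assumes "label (A, B) = 1" "card A > 0"
  shows "card B = card A"
  using assms unfolding label_def by (simp add: divide_eq_1_iff)

lemma card_component_stake_eventually_const: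
  assumes "no_active_self_liftable_branch delta rho" "0 < L" "sdrop L s = s"
  shows "\<exists>N. \<forall>j\<ge>N. card (component (stake j s)) = card (component (stake N s))"
proof -
  let ?p = "\<lambda>j. component (stake j s)"
  have "\<not> active ?p"
    using assms branch_stake self_liftable_branch_stake
    unfolding no_active_self_liftable_branch_def by blast
  then obtain N where N: "\<forall>j\<ge>N. label (?p j, ?p (Suc j)) = 1"
    unfolding active_def by blast
  have "card (?p j) = card (?p N)" if "N \<le> j" for j
    using that
  proof (induct rule: dec_induct)
    case (step j)
    then show ?case
      using card_eq_of_label_one[OF N[rule_format] card_component_pos] by simp
  qed simp
  then show ?thesis
    by blast
qed

lemma bij_betw_drop_power_component:
  assumes "no_active_self_liftable_branch delta rho" "c \<noteq> []"
  obtains K where "\<And>r. bij_betw (drop (r * length c))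
    (component (concat (replicate (r + K) c))) (component (concat (replicate K c)))"
proof -
  let ?c = "\<lambda>k. concat (replicate k c)"
  obtain K where K: "\<And>j. K \<le> j \<Longrightarrow>
      card (component (stake j (cycle c))) = card (component (stake K (cycle c)))"
    using card_component_stake_eventually_const[OF assms(1) _ sdrop_cycle_eq[OF assms(2)]]
      assms(2) by auto
  have card_power: "card (component (?c k)) = card (component (stake K (cycle c)))" if "K \<le> k" for k
  proof -
    have "k \<le> k * length c"
      using assms(2) by (cases c) auto
    then have "K \<le> k * length c"
      using that by (rule le_trans[rotated])
    then show ?thesis
      using K[of "k * length c"] assms(2) by simp
  qed
  have "bij_betw (drop (r * length c)) (component (?c (r + K))) (component (?c K))" for r
  proof -
    have image: "drop (r * length c) ` component (?c (r + K)) = component (?c K)"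
      by (simp add: drop_component concat_replicate_add)
    have "card (component (?c (r + K))) = card (component (?c K))"
      using card_power[of "r + K"] card_power[of K] by simp
    then have "inj_on (drop (r * length c)) (component (?c (r + K)))"
      by (intro eq_card_imp_inj_on[OF finite_component]) (simp add: image)
    then show ?thesis
      unfolding bij_betw_def using image by simp
  qed
  then show ?thesis
    using that by blast
qed

lemma exists_power_rhoW_id:
  assumes "no_active_self_liftable_branch delta rho" "c \<noteq> []"
  shows "\<exists>d>0. rhoW delta rho (concat (replicate d c)) = id"
proof -
  let ?c = "\<lambda>k. concat (replicate k c)"
  obtain K where bij_drop:
    "\<And>r. bij_betw (drop (r * length c)) (component (?c (r + K))) (component (?c K))"
    using bij_betw_drop_power_component[OF assms] by blast
  obtain r1 r2 where "r1 < r2" and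
    eq: "\<forall>b1\<in>component (?c (r1 + K)). \<forall>b2\<in>component (?c (r2 + K)).
          drop (r1 * length c) b1 = drop (r2 * length c) b2 \<longrightarrow> rhoW delta rho b1 = rhoW delta rho b2"
    using exists_rhoW_eq_of_bij_drop[where B = "\<lambda>r. component (?c (r + K))" and
        l = "\<lambda>r. r * length c", OF bij_drop component_delta1 finite_component]
    by blast
  have "rhoW delta rho (?c (r1 + K)) = rhoW delta rho (?c (r2 + K))"
    using eq component_self by (simp add: concat_replicate_add)
  then have "rhoW delta rho (?c K @ ?c r1) = rhoW delta rho (?c K @ ?c r2)"
    by (simp add: concat_replicate_add[symmetric] add.commute)
  then have "rhoW delta rho (?c r1) = rhoW delta rho (?c r2)"
    by (rule rhoW_append_cancel)
  moreover have "?c r2 = ?c r1 @ ?c (r2 - r1)"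
    using concat_replicate_add[of r1 "r2 - r1" c] \<open>r1 < r2\<close> by simp
  ultimately have "rhoW delta rho (?c r1 @ []) = rhoW delta rho (?c r1 @ ?c (r2 - r1))"
    by simp
  then have "rhoW delta rho [] = rhoW delta rho (?c (r2 - r1))"
    by (rule rhoW_append_cancel)
  then have "rhoW delta rho (?c (r2 - r1)) = id"
    by (simp add: fun_eq_iff)
  then show ?thesis
    using \<open>r1 < r2\<close> zero_less_diff by blast
qed

end

section \<open>The jungle path and its stems\<close>

locale jungle = inv_rev_automaton delta rho
  for delta :: "'s::finite \<Rightarrow> 'q::finite \<Rightarrow> 'q" and rho +
  fixes p :: "nat \<Rightarrow> 'q list set" and n :: nat
  assumes jungle: "jungle_path delta rho p n"
begin

lemma n_pos: "0 < n"
  using jungle unfolding jungle_path_def by simp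

lemma tree_edge_take_Suc:
  "k < length w \<Longrightarrow> tree_edge delta rho (component (take k w)) (component (take (Suc k) w))"
  unfolding tree_edge_def by (metis take_Suc_conv_app_nth)

lemma path_root: "p 0 = component []"
  using jungle unfolding jungle_path_def init_path_def by simp

lemma path_edge:
  assumes "j < n"
  obtains u x where "p j = component u" "p (Suc j) = component (u @ [x])"
proof -
  have "tree_edge delta rho (p j) (p (Suc j))"
    using jungle assms unfolding jungle_path_def init_path_def by blast
  then show ?thesis
    using that unfolding tree_edge_def by blast
qed

lemma path_vertex: "j \<le> n \<Longrightarrow> \<exists>w. length w = j \<and> p j = component w"
proof (induct j)
  case 0
  then show ?case
    using path_root by simp
next
  case (Suc j)
  then obtain w where w: "length w = j" "p j = component w"
    by auto
  obtain u x where ux: "p j = component u" "p (Suc j) = component (u @ [x])"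
    using path_edge Suc.prems by (metis Suc_le_lessD)
  have "length u = j"
    using length_component[of u w] ux(1) w by simp
  then show ?case
    using ux(2) by (intro exI[of _ "u @ [x]"]) simp
qed

lemma length_path_vertex: "j \<le> n \<Longrightarrow> z \<in> p j \<Longrightarrow> length z = j"
  using path_vertex length_component by metis

lemma component_path_vertex: "j \<le> n \<Longrightarrow> z \<in> p j \<Longrightarrow> component z = p j"
  using path_vertex component_eq by metis

lemma take_path_vertex:
  assumes "k \<le> j" "j \<le> n" "z \<in> p j"
  shows "take k z \<in> p k"
  using assms
proof (induct j arbitrary: z)
  case 0
  then show ?case
    using path_root by simp
next
  case (Suc j)
  show ?case
  proof (cases "k = Suc j")
    case True
    then show ?thesis
      using Suc.prems length_path_vertex by simp
  next
    case False
    obtain u x where ux: "p j = component u" "p (Suc j) = component (u @ [x])"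
      using path_edge Suc.prems(2) by (metis Suc_le_lessD)
    have "length u = j"
      using length_path_vertex[of j u] ux(1) Suc.prems(2) by simp
    then have "take j z \<in> p j"
      using take_component[of j "u @ [x]"] Suc.prems(3) ux by auto
    then have "take k (take j z) \<in> p k"
      using Suc.hyps[of "take j z"] Suc.prems False by linarith
    then show ?thesis
      using False Suc.prems(1) by (simp add: min_absorb1)
  qed
qed

lemma length_below_stems:
  assumes "(p n, C) \<in> {(A, B). tree_edge delta rho A B}\<^sup>*" "z \<in> C"
  shows "n \<le> length z"
  using assms
proof (induct arbitrary: z rule: rtrancl_induct)
  case base
  then show ?case
    using length_path_vertex[OF order_refl] by simp
next
  case (step C D)
  then obtain u x where ux: "C = component u" "D = component (u @ [x])"
    unfolding tree_edge_def by blast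
  then have "n \<le> length u"
    using step.hyps(3) component_self by blast
  moreover have "length z = Suc (length u)"
    using length_component step.prems ux(2) by fastforce
  ultimately show ?case
    by simp
qed

lemma liftable_to_last_edge_iff:
  assumes "n \<le> length x"
  shows "liftable (C, component x) (p (n - 1), p n) \<longleftrightarrow> drop (length x - n) x \<in> p n"
proof
  assume "liftable (C, component x) (p (n - 1), p n)"
  then have "\<exists>a v. x = a @ v \<and> v \<in> p n"
    unfolding liftable_def using component_self by simp
  then obtain a v where "x = a @ v" "v \<in> p n"
    by blast
  moreover have "length v = n"
    using \<open>v \<in> p n\<close> length_path_vertex by simp
  ultimately show "drop (length x - n) x \<in> p n"
    by simp
next
  assume x: "drop (length x - n) x \<in> p n"
  show "liftable (C, component x) (p (n - 1), p n)"
    unfolding liftable_def snd_conv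
  proof
    fix z assume "z \<in> component x"
    then have "drop (length x - n) z \<in> p n" "length z = length x"
      using drop_component[of "length x - n" x] component_path_vertex[OF order_refl x]
        length_component by auto
    then show "\<exists>a v. z = a @ v \<and> v \<in> p n"
      by (metis append_take_drop_id)
  qed
qed

section \<open>Words whose factors are stems\<close>

definition stem_windows :: "'q list \<Rightarrow> bool" where
  "stem_windows w \<longleftrightarrow> n \<le> length w \<and> (\<forall>i. i + n \<le> length w \<longrightarrow> take n (drop i w) \<in> p n)"

lemma take_stem_windows: "stem_windows w \<Longrightarrow> take n w \<in> p n"
  unfolding stem_windows_def by (metis add_0 drop_0)

lemma stem_windows_stem: "u \<in> p n \<Longrightarrow> stem_windows u"
  unfolding stem_windows_def using length_path_vertex[OF order_refl] by simp

lemma stem_windows_drop: "stem_windows w \<Longrightarrow> k + n \<le> length w \<Longrightarrow> stem_windows (drop k w)"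
  unfolding stem_windows_def by (simp add: add.assoc[symmetric] add.commute[of _ k])

lemma stem_windows_overlap:
  assumes "stem_windows (a @ x)" "stem_windows (x @ b)" "length x = n"
  shows "stem_windows (a @ x @ b)"
  unfolding stem_windows_def
proof (intro conjI allI impI)
  show "n \<le> length (a @ x @ b)"
    using assms(3) by simp
  fix i assume i: "i + n \<le> length (a @ x @ b)"
  show "take n (drop i (a @ x @ b)) \<in> p n"
  proof (cases "i \<le> length a")
    case True
    then have "take n (drop i (a @ x @ b)) = take n (drop i (a @ x))"
      using assms(3) by simp
    then show ?thesis
      using assms(1) True assms(3) unfolding stem_windows_def by simp
  next
    case False
    then have "(i - length a) + n \<le> length (x @ b)"
      using i by simp
    with assms(2) have "take n (drop (i - length a) (x @ b)) \<in> p n"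
      unfolding stem_windows_def by blast
    moreover have "drop i (a @ x @ b) = drop (i - length a) (x @ b)"
      using False by simp
    ultimately show ?thesis
      by simp
  qed
qed

lemma jungle_edge_init_iff:
  assumes "k < n" "k < length w"
  shows "(component (take k w), component (take (Suc k) w)) \<in> jungle_edges delta rho p n
     \<longleftrightarrow> take (Suc k) w \<in> p (Suc k)"
proof
  assume "(component (take k w), component (take (Suc k) w)) \<in> jungle_edges delta rho p n"
  then consider j where "j < n" "component (take (Suc k) w) = p (Suc j)"
    | "(p n, component (take k w)) \<in> {(A, B). tree_edge delta rho A B}\<^sup>*"
    unfolding jungle_edges_def by blast
  then show "take (Suc k) w \<in> p (Suc k)"
  proof cases
    case (1 j)
    then have "take (Suc k) w \<in> p (Suc j)"
      using component_self by metis
    moreover from this have "j = k"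
      using 1(1) assms(2) length_path_vertex[of "Suc j" "take (Suc k) w"] by simp
    ultimately show ?thesis
      by simp
  next
    case 2
    then show ?thesis
      using length_below_stems[OF 2 component_self] assms by simp
  qed
next
  assume "take (Suc k) w \<in> p (Suc k)"
  moreover from this have "take k w \<in> p k"
    using take_path_vertex[of k "Suc k" "take (Suc k) w"] assms by (simp add: min_absorb1)
  ultimately have "component (take k w) = p k" "component (take (Suc k) w) = p (Suc k)"
    using assms component_path_vertex by auto
  then show "(component (take k w), component (take (Suc k) w)) \<in> jungle_edges delta rho p n"
    unfolding jungle_edges_def using assms(1) by blast
qed

lemma jungle_edge_below_iff:
  assumes "n \<le> k" "k < length w"
  shows "(component (take k w), component (take (Suc k) w)) \<in> jungle_edges delta rho p n
     \<longleftrightarrow> (p n, component (take k w)) \<in> {(A, B). tree_edge delta rho A B}\<^sup>* \<and>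
         take n (drop (Suc k - n) w) \<in> p n"
proof -
  have window: "drop (Suc k - n) (take (Suc k) w) = take n (drop (Suc k - n) w)"
    using assms by (simp add: drop_take)
  have not_path: "(component (take k w), component (take (Suc k) w)) \<notin> {(p j, p (Suc j)) | j. j < n}"
  proof
    assume "(component (take k w), component (take (Suc k) w)) \<in> {(p j, p (Suc j)) | j. j < n}"
    then obtain j where "j < n" "component (take (Suc k) w) = p (Suc j)"
      by blast
    then have "length (take (Suc k) w) = Suc j"
      using length_path_vertex[of "Suc j" "take (Suc k) w"] component_self by (metis Suc_leI)
    then show False
      using assms \<open>j < n\<close> by simp
  qed
  have lift: "liftable (C, component (take (Suc k) w)) (p (n - 1), p n)
      \<longleftrightarrow> take n (drop (Suc k - n) w) \<in> p n" for C
    using liftable_to_last_edge_iff[of "take (Suc k) w"] assms window by simp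
  show ?thesis
    unfolding jungle_edges_def using not_path lift tree_edge_take_Suc[OF assms(2)] by auto
qed

lemma jungle_word_iff_stem_windows:
  assumes "n \<le> length w"
  shows "jungle_word delta rho p n w \<longleftrightarrow> stem_windows w"
proof
  assume jw: "jungle_word delta rho p n w"
  have "take n (drop i w) \<in> p n" if "i + n \<le> length w" for i
  proof (cases i)
    case 0
    have "n - 1 < n" "n - 1 < length w" "Suc (n - 1) = n"
      using n_pos assms by auto
    moreover from this have
      "(component (take (n - 1) w), component (take (Suc (n - 1)) w)) \<in> jungle_edges delta rho p n"
      using jw unfolding jungle_word_def by blast
    ultimately have "take (Suc (n - 1)) w \<in> p (Suc (n - 1))"
      using jungle_edge_init_iff by blast
    then show ?thesis
      using \<open>Suc (n - 1) = n\<close> 0 by simp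
  next
    case (Suc i')
    then show ?thesis
      using jw jungle_edge_below_iff[of "i' + n" w] that unfolding jungle_word_def by simp
  qed
  then show "stem_windows w"
    unfolding stem_windows_def using assms by simp
next
  assume sw: "stem_windows w"
  have reach: "(p n, component (take k w)) \<in> {(A, B). tree_edge delta rho A B}\<^sup>*"
    if "n \<le> k" "k \<le> length w" for k
    using that
  proof (induct k rule: dec_induct)
    case base
    then show ?case
      using component_path_vertex[OF order_refl take_stem_windows[OF sw]] by simp
  next
    case (step k)
    then show ?case
      using tree_edge_take_Suc[of k w] by (auto intro: rtrancl_into_rtrancl)
  qed
  show "jungle_word delta rho p n w"
    unfolding jungle_word_def
  proof (intro allI impI)
    fix k assume k: "k < length w"
    show "(component (take k w), component (take (Suc k) w)) \<in> jungle_edges delta rho p n"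
    proof (cases "k < n")
      case True
      have "take (Suc k) (take n w) \<in> p (Suc k)"
        using take_path_vertex[OF _ order_refl take_stem_windows[OF sw]] True by simp
      then show ?thesis
        using jungle_edge_init_iff True k by (simp add: min_absorb1)
    next
      case False
      then show ?thesis
        using jungle_edge_below_iff reach sw k unfolding stem_windows_def by simp
    qed
  qed
qed

section \<open>The graph on stems\<close>

definition links :: "'q list set" where
  "links = {w. length w = Suc n \<and> take n w \<in> p n \<and> drop 1 w \<in> p n}"

definition stem_graph :: "('q list \<times> 'q list) set" where
  "stem_graph = {(take n w, drop 1 w) | w. w \<in> links}"

lemma finite_links: "finite links"
proof (rule finite_subset)
  show "links \<subseteq> {w. set w \<subseteq> UNIV \<and> length w = Suc n}"
    unfolding links_def by blast
  show "finite {w. set w \<subseteq> (UNIV :: 'q set) \<and> length w = Suc n}"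
    by (rule finite_lists_length_eq) simp
qed

lemma stem_windows_link: "w \<in> links \<Longrightarrow> stem_windows w"
  unfolding links_def stem_windows_def by (auto simp: le_Suc_eq)

lemma component_link_subset:
  assumes "w \<in> links"
  shows "component w \<subseteq> links"
proof
  fix z assume "z \<in> component w"
  then have "take n z \<in> component (take n w)" "drop 1 z \<in> component (drop 1 w)"
    "length z = length w"
    using take_component drop_component length_component by blast+
  then show "z \<in> links"
    using assms component_path_vertex[OF order_refl] unfolding links_def by auto
qed

lemma link_legit_child:
  assumes "w \<in> links"
  shows "legit_child delta rho (p (n - 1), p n) (p n, component w)"
proof -
  have w: "length w = Suc n" "take n w \<in> p n" "drop 1 w \<in> p n"
    using assms unfolding links_def by auto
  have "tree_edge delta rho (component (take n w)) (component w)"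
    using tree_edge_take_Suc[of n w] w(1) by simp
  moreover have "liftable (p n, component w) (p (n - 1), p n)"
    using liftable_to_last_edge_iff[of w] w by simp
  ultimately show ?thesis
    unfolding legit_child_def using component_path_vertex[OF order_refl w(2)] by simp
qed

lemma card_component_link:
  assumes "w \<in> links"
  shows "card (component w) = card (p n)"
proof -
  have "label (p n, component w) = 1"
    using jungle link_legit_child[OF assms] unfolding jungle_path_def Let_def by blast
  then show ?thesis
    using card_eq_of_label_one path_vertex card_component_pos by (metis order_refl)
qed

lemma bij_betw_take_drop_link:
  assumes "w \<in> links"
  shows "bij_betw (take n) (component w) (p n)" "bij_betw (drop 1) (component w) (p n)"
proof -
  have "take n ` component w = p n" "drop 1 ` component w = p n"
    using assms take_component drop_component component_path_vertex[OF order_refl]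
    unfolding links_def by auto
  then show "bij_betw (take n) (component w) (p n)" "bij_betw (drop 1) (component w) (p n)"
    unfolding bij_betw_def using card_component_link[OF assms]
    by (auto intro: eq_card_imp_inj_on[OF finite_component])
qed

lemma card_link_fiber:
  assumes bij: "\<And>w. w \<in> links \<Longrightarrow> bij_betw f (component w) (p n)" and "y \<in> p n"
  shows "card {w \<in> links. f w = y} = card (component ` links)"
proof (rule bij_betw_same_card, rule bij_betwI')
  fix w1 w2 assume w1: "w1 \<in> {w \<in> links. f w = y}" and w2: "w2 \<in> {w \<in> links. f w = y}"
  show "component w1 = component w2 \<longleftrightarrow> w1 = w2"
  proof
    assume "component w1 = component w2"
    then have "w2 \<in> component w1"
      using component_self by simp
    moreover have "inj_on f (component w1)"
      using bij w1 unfolding bij_betw_def by simp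
    ultimately show "w1 = w2"
      using w1 w2 component_self inj_onD by fastforce
  qed simp
next
  fix w assume "w \<in> {w \<in> links. f w = y}"
  then show "component w \<in> component ` links"
    by blast
next
  fix C assume "C \<in> component ` links"
  then obtain w where w: "w \<in> links" "C = component w"
    by blast
  then have "y \<in> f ` component w"
    using bij_betw_imp_surj_on[OF bij] \<open>y \<in> p n\<close> by simp
  then obtain z where z: "z \<in> component w" "f z = y"
    by blast
  then have "z \<in> {w \<in> links. f w = y}" "C = component z"
    using w component_link_subset component_eq by auto
  then show "\<exists>z \<in> {w \<in> links. f w = y}. C = component z"
    by blast
qed

lemma stem_graph_reach_back:
  assumes "(u, v) \<in> stem_graph\<^sup>*"
  shows "(v, u) \<in> stem_graph\<^sup>*"
proof -
  have balanced: "card {w \<in> links. take n w = y} = card {w \<in> links. drop 1 w = y}" for y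
  proof (cases "y \<in> p n")
    case True
    then show ?thesis
      using card_link_fiber[OF bij_betw_take_drop_link(1)] card_link_fiber[OF bij_betw_take_drop_link(2)]
      by simp
  next
    case False
    then have "{w \<in> links. take n w = y} = {}" "{w \<in> links. drop 1 w = y} = {}"
      unfolding links_def by auto
    then show ?thesis
      by (simp only:)
  qed
  show ?thesis
    using balanced_digraph_reach_back[where W = links and src = "take n" and tgt = "drop 1",
        OF finite_links balanced] assms
    unfolding stem_graph_def .
qed

lemma take_Suc_in_links:
  assumes "Suc n \<le> length w" "take n w \<in> p n" "take n (drop 1 w) \<in> p n"
  shows "take (Suc n) w \<in> links"
  using assms unfolding links_def by (simp add: drop_take min_absorb1)

lemma stem_graph_path_of_stem_windows:
  assumes "stem_windows (a @ v)" "length v = n"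
  shows "(take n (a @ v), v) \<in> stem_graph\<^sup>*"
  using assms(1)
proof (induct a)
  case Nil
  then show ?case
    using assms(2) by simp
next
  case (Cons x a)
  let ?w = "x # a @ v"
  have len: "Suc n \<le> length ?w"
    using assms(2) by simp
  have window: "take n (drop i ?w) \<in> p n" if "i + n \<le> length ?w" for i
    using Cons.prems that unfolding stem_windows_def append_Cons by blast
  have "take n ?w \<in> p n" "take n (drop 1 ?w) \<in> p n"
    using window[of 0] window[of 1] len by auto
  then have "take (Suc n) ?w \<in> links"
    using take_Suc_in_links len by blast
  moreover have "take n (take (Suc n) ?w) = take n ?w" "drop 1 (take (Suc n) ?w) = take n (a @ v)"
    by (simp_all only: take_take drop_take min_absorb1 le_SucI order_refl) simp
  ultimately have edge: "(take n ?w, take n (a @ v)) \<in> stem_graph"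
    unfolding stem_graph_def by (metis (mono_tags, lifting) mem_Collect_eq)
  have "stem_windows (a @ v)"
    using stem_windows_drop[OF Cons.prems, of 1] len by simp
  then have "(take n ?w, v) \<in> stem_graph\<^sup>*"
    by (rule converse_rtrancl_into_rtrancl[OF edge Cons.hyps])
  then show ?case
    by simp
qed

lemma stem_windows_prepend_edge:
  assumes "(y, z) \<in> stem_graph" "stem_windows w" "take n w = z"
  shows "\<exists>x. stem_windows (x # w) \<and> take n (x # w) = y"
proof -
  obtain l where l: "l \<in> links" "y = take n l" "z = drop 1 l"
    using assms(1) unfolding stem_graph_def by blast
  then obtain x where x: "l = x # z" "length z = n"
    unfolding links_def by (cases l) auto
  obtain r where w: "w = z @ r"
    using assms(3) by (metis append_take_drop_id)
  have "stem_windows ([x] @ z @ r)"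
    using stem_windows_overlap[of "[x]" z r] stem_windows_link[OF l(1)] assms(2) w x by simp
  moreover have "take n ((x # z) @ r) = take n (x # z)"
    using x(2) by (subst take_append) simp
  then have "take n (x # w) = y"
    using l(2) x w by simp
  ultimately show ?thesis
    using w by (intro exI[of _ x]) simp
qed

lemma stem_windows_of_stem_graph_path:
  assumes "(y, v) \<in> stem_graph\<^sup>*" "v \<in> p n"
  shows "\<exists>a. stem_windows (a @ v) \<and> take n (a @ v) = y"
  using assms(1)
proof (induct rule: converse_rtrancl_induct)
  case base
  then show ?case
    using assms(2) stem_windows_stem length_path_vertex[OF order_refl]
    by (intro exI[of _ "[]"]) simp
next
  case (step y z)
  then obtain a where "stem_windows (a @ v)" "take n (a @ v) = z"
    by blast
  then show ?case
    using stem_windows_prepend_edge[OF step(1)] by (metis append_Cons)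
qed

lemma exists_link: "\<exists>w. w \<in> links"
proof -
  obtain f where f: "legit_child delta rho (p (n - 1), p n) f"
    using jungle unfolding jungle_path_def Let_def by blast
  then have "tree_edge delta rho (p n) (snd f)"
    unfolding legit_child_def by auto
  then obtain u x where ux: "p n = component u" "snd f = component (u @ [x])"
    unfolding tree_edge_def by blast
  have lift: "liftable (fst f, component (u @ [x])) (p (n - 1), p n)"
    using f ux(2) unfolding legit_child_def by (metis prod.collapse)
  have u: "u \<in> p n" "length u = n"
    using ux(1) length_path_vertex[OF order_refl] by auto
  have "drop 1 (u @ [x]) \<in> p n"
    using lift liftable_to_last_edge_iff[of "u @ [x]" "fst f"] u(2) by simp
  then have "u @ [x] \<in> links"
    using u unfolding links_def by simp
  then show ?thesis
    by blast
qed

lemma exists_link_from: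
  assumes "u \<in> p n"
  shows "\<exists>w\<in>links. take n w = u"
proof -
  have "card (component ` links) > 0"
    using exists_link finite_links by (auto simp: card_gt_0_iff)
  then have "card {w \<in> links. take n w = u} > 0"
    using card_link_fiber[OF bij_betw_take_drop_link(1) assms] by simp
  then show ?thesis
    by (auto simp: card_gt_0_iff)
qed

section \<open>Cycles through a stem\<close>

definition stem_cycle :: "'q list \<Rightarrow> 'q list \<Rightarrow> bool" where
  "stem_cycle u c \<longleftrightarrow> c \<noteq> [] \<and> stem_windows (c @ u) \<and> take n (c @ u) = u"

lemma exists_stem_cycle:
  assumes "u \<in> p n"
  shows "\<exists>c. stem_cycle u c"
proof -
  obtain w where w: "w \<in> links" "take n w = u"
    using exists_link_from[OF assms] by blast
  then have edge: "(u, drop 1 w) \<in> stem_graph"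
    unfolding stem_graph_def by blast
  then have "(drop 1 w, u) \<in> stem_graph\<^sup>*"
    using r_into_rtrancl stem_graph_reach_back by metis
  then obtain a where "stem_windows (a @ u)" "take n (a @ u) = drop 1 w"
    using stem_windows_of_stem_graph_path assms by blast
  then obtain x where "stem_windows (x # a @ u)" "take n (x # a @ u) = u"
    using stem_windows_prepend_edge[OF edge] by blast
  then show ?thesis
    unfolding stem_cycle_def by (intro exI[of _ "x # a"]) simp
qed

lemma stem_cycle_power:
  assumes "stem_cycle u c" "0 < k"
  shows "stem_cycle u (concat (replicate k c))"
  using assms(2)
proof (induct k)
  case (Suc k)
  have "u \<in> p n"
    using assms(1) take_stem_windows[of "c @ u"] unfolding stem_cycle_def by simp
  then have u: "length u = n"
    using length_path_vertex[OF order_refl] by simp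
  show ?case
  proof (cases "k = 0")
    case True
    then show ?thesis
      using assms(1) by simp
  next
    case False
    then have IH: "stem_cycle u (concat (replicate k c))"
      using Suc.hyps by simp
    define r where "r = drop n (concat (replicate k c) @ u)"
    have split: "concat (replicate k c) @ u = u @ r"
      using IH unfolding stem_cycle_def r_def by (metis append_take_drop_id)
    have "stem_windows (u @ r)"
      using IH split unfolding stem_cycle_def by simp
    then have "stem_windows (c @ u @ r)"
      using stem_windows_overlap[of c u r] assms(1) u unfolding stem_cycle_def by simp
    moreover have "take n (c @ u @ r) = u"
      using assms(1) u unfolding stem_cycle_def by (simp add: take_append)
    ultimately show ?thesis
      using assms(1) split unfolding stem_cycle_def by simp
  qed
qed simp

lemma take_stem_cycle: "stem_cycle u c \<Longrightarrow> n \<le> length c \<Longrightarrow> take n c = u"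
  unfolding stem_cycle_def by simp

lemma jungle_simI:
  assumes "stem_windows (x @ u)" "take n x = v" "v \<in> p n" "rhoW delta rho x = id"
  shows "jungle_sim delta rho p n v u"
proof -
  have "length v = n"
    using assms(3) length_path_vertex[OF order_refl] by simp
  obtain s where x: "x = v @ s"
    using assms(2) by (metis append_take_drop_id)
  have "n \<le> length (x @ u)"
    using x \<open>length v = n\<close> by simp
  then have "jungle_word delta rho p n (v @ s @ u)"
    using assms(1) jungle_word_iff_stem_windows x by simp
  moreover have "\<forall>t. rhoW delta rho (v @ s) t = t"
    using assms(4) x by simp
  ultimately show ?thesis
    unfolding jungle_sim_def by blast
qed

lemma jungle_sim_refl:
  assumes "no_active_self_liftable_branch delta rho" "u \<in> p n"
  shows "jungle_sim delta rho p n u u"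
proof -
  obtain c where c: "stem_cycle u c"
    using exists_stem_cycle[OF assms(2)] by blast
  define c' where "c' = concat (replicate n c)"
  have c': "stem_cycle u c'" "n \<le> length c'"
    using stem_cycle_power[OF c n_pos] c unfolding c'_def stem_cycle_def by (auto simp: Suc_le_eq)
  obtain d where "0 < d" and d: "rhoW delta rho (concat (replicate d c')) = id"
    using exists_power_rhoW_id[OF assms(1)] c' unfolding stem_cycle_def by blast
  define x where "x = concat (replicate d c')"
  have x: "stem_cycle u x"
    using stem_cycle_power[OF c'(1) \<open>0 < d\<close>] unfolding x_def .
  have "length c' \<le> length x"
    using \<open>0 < d\<close> unfolding x_def by simp
  then have "take n x = u"
    using take_stem_cycle[OF x] c'(2) by simp
  then show ?thesis
    using jungle_simI[of x u u] x assms(2) d unfolding stem_cycle_def x_def by simp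
qed

lemma jungle_sim_sym:
  assumes "no_active_self_liftable_branch delta rho" "u \<in> p n" "v \<in> p n"
    and "jungle_sim delta rho p n u v"
  shows "jungle_sim delta rho p n v u"
proof -
  obtain s where jw: "jungle_word delta rho p n (u @ s @ v)" and "\<forall>t. rhoW delta rho (u @ s) t = t"
    using assms(4) unfolding jungle_sim_def by blast
  then have us: "rhoW delta rho (u @ s) = id"
    by (simp add: fun_eq_iff)
  have len: "length u = n" "length v = n"
    using assms(2,3) length_path_vertex[OF order_refl] by auto
  then have sw: "stem_windows ((u @ s) @ v)"
    using jw jungle_word_iff_stem_windows by simp
  then have "(u, v) \<in> stem_graph\<^sup>*"
    using stem_graph_path_of_stem_windows[OF sw len(2)] len(1) by simp
  then obtain a where a: "stem_windows (a @ u)" "take n (a @ u) = v"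
    using stem_graph_reach_back stem_windows_of_stem_graph_path assms(2) by blast
  then obtain r where r: "a @ u = v @ r"
    by (metis append_take_drop_id)
  define c where "c = u @ s @ a"
  have "stem_windows ((u @ s) @ v @ r)"
    using stem_windows_overlap[OF sw _ len(2)] a(1) r by simp
  then have c: "stem_cycle u c"
    using r len n_pos unfolding stem_cycle_def c_def by auto
  obtain d where "0 < d" and d: "rhoW delta rho (concat (replicate d c)) = id"
    using exists_power_rhoW_id[OF assms(1)] c unfolding stem_cycle_def by blast
  then obtain d' where "d = Suc d'"
    using gr0_implies_Suc by blast
  \<comment> \<open>using \<open>c\<^sup>2\<^sup>d\<close> rather than \<open>c\<^sup>d\<close> makes \<open>x\<close> long enough to begin with \<open>v\<close>\<close>
  define x where "x = a @ c @ concat (replicate (d' + d') c)"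
  have cx: "concat (replicate (d + d) c) = (u @ s) @ x"
    unfolding x_def c_def \<open>d = Suc d'\<close> by simp
  have "rhoW delta rho (concat (replicate (d + d) c)) = id"
    using d by (simp add: concat_replicate_add rhoW_append)
  then have "rhoW delta rho x = id"
    using us unfolding cx rhoW_append by simp
  moreover have "stem_windows (x @ u)"
  proof -
    have "stem_windows ((u @ s) @ x @ u)"
      using stem_cycle_power[OF c, of "d + d"] \<open>0 < d\<close> cx unfolding stem_cycle_def by simp
    then show ?thesis
      using stem_windows_drop[of "(u @ s) @ x @ u" "length (u @ s)"] len by simp
  qed
  moreover have "take n x = v"
    using a(2) len unfolding x_def c_def by (simp add: take_append)
  ultimately show ?thesis
    using jungle_simI assms(3) by blast
qed

lemma jungle_sim_trans:
  assumes "v \<in> p n" "jungle_sim delta rho p n u v" "jungle_sim delta rho p n v w"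
  shows "jungle_sim delta rho p n u w"
proof -
  obtain s where s: "jungle_word delta rho p n (u @ s @ v)" "\<forall>x. rhoW delta rho (u @ s) x = x"
    using assms(2) unfolding jungle_sim_def by blast
  obtain t where t: "jungle_word delta rho p n (v @ t @ w)" "\<forall>x. rhoW delta rho (v @ t) x = x"
    using assms(3) unfolding jungle_sim_def by blast
  have len: "length v = n"
    using assms(1) length_path_vertex[OF order_refl] by simp
  have "stem_windows ((u @ s) @ v)" "stem_windows (v @ t @ w)"
    using s(1) t(1) jungle_word_iff_stem_windows len by auto
  then have "stem_windows ((u @ s) @ v @ t @ w)"
    using stem_windows_overlap len by blast
  then have "jungle_word delta rho p n (u @ (s @ v @ t) @ w)"
    using jungle_word_iff_stem_windows len by simp
  moreover have "rhoW delta rho (u @ (s @ v @ t)) x = x" for x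
    using s(2) t(2) rhoW_append[of delta rho "u @ s" "v @ t"] by simp
  ultimately show ?thesis
    unfolding jungle_sim_def by blast
qed

end

theorem lemma5p10:
  fixes delta :: "'s::finite \<Rightarrow> 'q::finite \<Rightarrow> 'q"
    and rho :: "'q \<Rightarrow> 's \<Rightarrow> 's"
    and p :: "nat \<Rightarrow> 'q list set" and n :: nat
  assumes "bireversible delta rho"
    and "connected_aut delta rho"
    and "no_active_self_liftable_branch delta rho"
    and "jungle_path delta rho p n"
  shows "equiv (stems p n)
           {(u, v). u \<in> stems p n \<and> v \<in> stems p n \<and> jungle_sim delta rho p n u v}"
proof -
  interpret jungle delta rho p n
    using assms(1,4) unfolding bireversible_def by unfold_locales auto
  let ?R = "{(u, v). u \<in> p n \<and> v \<in> p n \<and> jungle_sim delta rho p n u v}"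
  have "equiv (p n) ?R"
  proof (rule equivI)
    show "?R \<subseteq> p n \<times> p n"
      by blast
    show "refl_on (p n) ?R"
      by (rule refl_onI) (auto intro: jungle_sim_refl[OF assms(3)])
    show "sym ?R"
      by (rule symI) (auto intro: jungle_sim_sym[OF assms(3)])
    show "trans ?R"
      by (rule transI) (auto intro: jungle_sim_trans)
  qed
  then show ?thesis
    unfolding stems_def .
qed

end
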